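(* Let $\otimes$ and $\oplus$ be uninorms on $[0,1]$. If $\otimes$ satisfies property $B$ and $\oplus$ satisfies property $A'$, then $(\otimes,\oplus)$ satisfies the rearrangement inequality.
   Context: A uninorm is a function $\otimes:[0,1]^2\to[0,1]$ that is commutative, associative, monotonic ($x\leq y$ implies $x\otimes z\leq y\otimes z$), and has an identity element $e\in[0,1]$. A function $f$ (written $f(x,y)$ or $x\,f\,y$) satisfies property $B$ if for all $0\leq x\leq y\leq1$ and $0\leq z\leq w\leq 1$, $f(x,w)-f(x,z)\leq f(y,w)-f(y,z)$; property $A'$ if for all $0\leq x\leq y\leq z\leq w\leq 1$, $w+x\geq y+z$ implies $f(x,w)\geq f(y,z)$. The pair $(\otimes,\oplus)$ satisfies the rearrangement inequality if for every $n\geq1$, all $0\leq x_1\leq\cdots\leq x_n\leq 1$, $0\leq y_1\leq\cdots\leq y_n\leq 1$ and every permutation $\sigma$ of $\{1,\dots,n\}$, $$(x_n\otimes y_1)\oplus\cdots\oplus(x_1\otimes y_n)\leq (x_{\sigma(1)}\otimes y_1)\oplus\cdots\oplus(x_{\sigma(n)}\otimes y_n)\leq (x_1\otimes y_1)\oplus\cdots\oplus(x_n\otimes y_n).$$ *)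

theory Defs
  imports Main "HOL-Combinatorics.Permutations" "HOL.Real"
begin

definition uninorm :: "(real \<Rightarrow> real \<Rightarrow> real) \<Rightarrow> bool" where
  "uninorm f \<longleftrightarrow>
     (\<forall>x\<in>{0..1}. \<forall>y\<in>{0..1}. f x y \<in> {0..1}) \<and>
     (\<forall>x\<in>{0..1}. \<forall>y\<in>{0..1}. f x y = f y x) \<and>
     (\<forall>x\<in>{0..1}. \<forall>y\<in>{0..1}. \<forall>z\<in>{0..1}. f (f x y) z = f x (f y z)) \<and>
     (\<forall>x\<in>{0..1}. \<forall>y\<in>{0..1}. \<forall>z\<in>{0..1}. x \<le> y \<longrightarrow> f x z \<le> f y z) \<and>
     (\<exists>e\<in>{0..1}. \<forall>x\<in>{0..1}. f e x = x)"

definition property_B :: "(real \<Rightarrow> real \<Rightarrow> real) \<Rightarrow> bool" where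
  "property_B f \<longleftrightarrow>
     (\<forall>x y z w. 0 \<le> x \<and> x \<le> y \<and> y \<le> 1 \<and> 0 \<le> z \<and> z \<le> w \<and> w \<le> 1 \<longrightarrow>
        f x w - f x z \<le> f y w - f y z)"

definition property_A' :: "(real \<Rightarrow> real \<Rightarrow> real) \<Rightarrow> bool" where
  "property_A' f \<longleftrightarrow>
     (\<forall>x y z w. 0 \<le> x \<and> x \<le> y \<and> y \<le> z \<and> z \<le> w \<and> w \<le> 1 \<longrightarrow>
        w + x \<ge> y + z \<longrightarrow> f x w \<ge> f y z)"

definition bigop :: "(real \<Rightarrow> real \<Rightarrow> real) \<Rightarrow> (nat \<Rightarrow> real) \<Rightarrow> nat \<Rightarrow> real" where
  "bigop f a n = foldl f (a 1) (map a [2..<n+1])"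

definition rearrangement_ineq ::
  "(real \<Rightarrow> real \<Rightarrow> real) \<Rightarrow> (real \<Rightarrow> real \<Rightarrow> real) \<Rightarrow> bool" where
  "rearrangement_ineq otimes oplus \<longleftrightarrow>
     (\<forall>n::nat. \<forall>x y :: nat \<Rightarrow> real. \<forall>\<sigma>.
        n \<ge> 1 \<longrightarrow>
        (\<forall>i\<in>{1..n}. 0 \<le> x i \<and> x i \<le> 1 \<and> 0 \<le> y i \<and> y i \<le> 1) \<longrightarrow>
        (\<forall>i\<in>{1..n}. \<forall>j\<in>{1..n}. i \<le> j \<longrightarrow> x i \<le> x j \<and> y i \<le> y j) \<longrightarrow>
        \<sigma> permutes {1..n} \<longrightarrow>
        bigop oplus (\<lambda>i. otimes (x (n + 1 - i)) (y i)) n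
          \<le> bigop oplus (\<lambda>i. otimes (x (\<sigma> i)) (y i)) n \<and>
        bigop oplus (\<lambda>i. otimes (x (\<sigma> i)) (y i)) n
          \<le> bigop oplus (\<lambda>i. otimes (x i) (y i)) n)"

end

theory Submission
  imports Defs
begin

text \<open>For \<open>a \<le> b\<close> and \<open>c \<le> d\<close>, property B gives
  \<open>(b \<otimes> c) + (a \<otimes> d) \<le> (a \<otimes> c) + (b \<otimes> d)\<close>; as \<open>a \<otimes> c\<close> is the smallest and
  \<open>b \<otimes> d\<close> the largest of the four products, property A' upgrades this to
  \<open>(b \<otimes> c) \<oplus> (a \<otimes> d) \<le> (a \<otimes> c) \<oplus> (b \<otimes> d)\<close>. Since \<open>\<oplus>\<close> is associative, commutative and
  monotone on \<open>[0,1]\<close>, swapping two terms whose \<open>x\<close>-values are in the wrong order never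
  decreases the iterated \<open>\<oplus>\<close>. Every permutation is sorted into the identity, and the reversal
  into every permutation, by finitely many such swaps.\<close>

lemma permutes_le_id_by_sorting_swaps:
  fixes F :: "('a::linorder \<Rightarrow> 'a) \<Rightarrow> 'b::preorder"
  assumes "finite A"
    and sorting_swap: "\<And>\<sigma> i j. \<sigma> permutes A \<Longrightarrow> i \<in> A \<Longrightarrow> j \<in> A \<Longrightarrow> i < j \<Longrightarrow> \<sigma> j < \<sigma> i
      \<Longrightarrow> F \<sigma> \<le> F (\<sigma> \<circ> transpose i j)"
    and "\<sigma> permutes A"
  shows "F \<sigma> \<le> F id"
proof -
  have "B \<subseteq> A \<Longrightarrow> \<sigma> permutes B \<Longrightarrow> F \<sigma> \<le> F id" if "finite B" for B \<sigma>
    using that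
  proof (induction B arbitrary: \<sigma> rule: finite_linorder_max_induct)
    case empty
    then show ?case by (simp add: permutes_empty)
  next
    case (insert b B)
    \<comment> \<open>One transposition puts the largest point \<open>b\<close> in place, and it sorts the inverted pair \<open>(j, b)\<close>.\<close>
    define j where "j = inv \<sigma> b"
    define \<sigma>' where "\<sigma>' = \<sigma> \<circ> transpose j b"
    have \<sigma>_j: "\<sigma> j = b"
      unfolding j_def using permutes_inverses(1)[OF insert.prems(2)] .
    have j: "j \<in> insert b B"
      unfolding j_def using permutes_in_image[OF permutes_inv[OF insert.prems(2)]] by simp
    have "\<sigma>' permutes insert b B"
      unfolding \<sigma>'_def using insert.prems(2) j by (simp add: permutes_compose permutes_swap_id)
    moreover have "\<sigma>' b = b"
      unfolding \<sigma>'_def using \<sigma>_j by simp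
    ultimately have "\<sigma>' permutes B"
      using permutes_superset[of \<sigma>' "insert b B" B] by auto
    then have "F \<sigma>' \<le> F id"
      using insert.IH insert.prems(1) by blast
    have "F \<sigma> \<le> F \<sigma>'"
    proof (cases "j = b")
      case True
      then show ?thesis unfolding \<sigma>'_def by simp
    next
      case False
      with j insert.hyps(2) have "j < b" by auto
      have "\<sigma> b \<in> insert b B"
        using permutes_in_image[OF insert.prems(2)] by simp
      moreover have "\<sigma> b \<noteq> b"
        using False \<sigma>_j permutes_inj[OF insert.prems(2)] by (metis injD)
      ultimately have "\<sigma> b < \<sigma> j"
        using insert.hyps(2) \<sigma>_j by auto
      then show ?thesis
        unfolding \<sigma>'_def using sorting_swap insert.prems \<open>j < b\<close> j
        by (meson insertI1 permutes_subset subsetD)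
    qed
    also note \<open>F \<sigma>' \<le> F id\<close>
    finally show ?case .
  qed
  then show ?thesis using assms by blast
qed

lemma permutes_ge_id_by_sorting_swaps:
  fixes F :: "('a::linorder \<Rightarrow> 'a) \<Rightarrow> 'b::ordered_ab_group_add"
  assumes "finite A"
    and "\<And>\<sigma> i j. \<sigma> permutes A \<Longrightarrow> i \<in> A \<Longrightarrow> j \<in> A \<Longrightarrow> i < j \<Longrightarrow> \<sigma> j < \<sigma> i
      \<Longrightarrow> F (\<sigma> \<circ> transpose i j) \<le> F \<sigma>"
    and "\<sigma> permutes A"
  shows "F id \<le> F \<sigma>"
  using permutes_le_id_by_sorting_swaps[of A "\<lambda>\<sigma>. - F \<sigma>"] assms by simp

lemma permutes_reverse: "(\<lambda>k::nat. if k \<in> {1..n} then n + 1 - k else k) permutes {1..n}"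
  by (rule bij_imp_permutes, rule bij_betw_byWitness[where f' = "\<lambda>k. if k \<in> {1..n} then n + 1 - k else k"])
    auto

lemma rearrangement_le_sorted:
  fixes S :: "(nat \<Rightarrow> 'a::linorder) \<Rightarrow> 'b::preorder"
  assumes x_mono: "\<And>i j. i \<in> {1..n} \<Longrightarrow> j \<in> {1..n} \<Longrightarrow> i \<le> j \<Longrightarrow> x i \<le> x j"
    and sorting_swap: "\<And>u i j. u ` {1..n} \<subseteq> x ` {1..n} \<Longrightarrow> i \<in> {1..n} \<Longrightarrow> j \<in> {1..n} \<Longrightarrow> i < j
      \<Longrightarrow> u j \<le> u i \<Longrightarrow> S u \<le> S (u \<circ> transpose i j)"
    and \<sigma>: "\<sigma> permutes {1..n}"
  shows "S (x \<circ> \<sigma>) \<le> S x"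
proof -
  have "S (x \<circ> \<sigma>) \<le> S (x \<circ> id)"
  proof (rule permutes_le_id_by_sorting_swaps[where A = "{1..n}"])
    fix \<tau> i j
    assume \<tau>: "\<tau> permutes {1..n}" and ij: "i \<in> {1..n}" "j \<in> {1..n}" "i < j" "\<tau> j < \<tau> i"
    have "\<tau> i \<in> {1..n}" "\<tau> j \<in> {1..n}"
      using permutes_in_image[OF \<tau>] ij(1,2) by blast+
    then have "(x \<circ> \<tau>) j \<le> (x \<circ> \<tau>) i"
      using \<open>\<tau> j < \<tau> i\<close> by (simp add: x_mono)
    moreover have "(x \<circ> \<tau>) ` {1..n} \<subseteq> x ` {1..n}"
      unfolding image_comp[symmetric] permutes_image[OF \<tau>] ..
    ultimately show "S (x \<circ> \<tau>) \<le> S (x \<circ> (\<tau> \<circ> transpose i j))"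
      using sorting_swap ij by (simp add: o_assoc)
  qed (use \<sigma> in simp_all)
  then show ?thesis
    by simp
qed

lemma rearrangement_reversed_le:
  fixes S :: "(nat \<Rightarrow> 'a::linorder) \<Rightarrow> 'b::ordered_ab_group_add"
  assumes x_mono: "\<And>i j. i \<in> {1..n} \<Longrightarrow> j \<in> {1..n} \<Longrightarrow> i \<le> j \<Longrightarrow> x i \<le> x j"
    and sorting_swap: "\<And>u i j. u ` {1..n} \<subseteq> x ` {1..n} \<Longrightarrow> i \<in> {1..n} \<Longrightarrow> j \<in> {1..n} \<Longrightarrow> i < j
      \<Longrightarrow> u j \<le> u i \<Longrightarrow> S u \<le> S (u \<circ> transpose i j)"
    and S_cong: "\<And>u v. (\<And>k. k \<in> {1..n} \<Longrightarrow> u k = v k) \<Longrightarrow> S u = S v"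
    and \<sigma>: "\<sigma> permutes {1..n}"
  shows "S (\<lambda>k. x (n + 1 - k)) \<le> S (x \<circ> \<sigma>)"
proof -
  \<comment> \<open>Through the reflection \<open>\<rho>\<close> the reversed arrangement becomes the identity arrangement of the
    decreasing sequence \<open>k \<mapsto> x (n + 1 - k)\<close>, which every sorting swap can only decrease.\<close>
  define \<rho> :: "nat \<Rightarrow> nat" where "\<rho> k = (if k \<in> {1..n} then n + 1 - k else k)" for k
  have "S (\<lambda>k. x (n + 1 - id k)) \<le> S (\<lambda>k. x (n + 1 - (\<rho> \<circ> \<sigma>) k))"
  proof (rule permutes_ge_id_by_sorting_swaps[where A = "{1..n}"])
    show "\<rho> \<circ> \<sigma> permutes {1..n}"
      unfolding \<rho>_def by (rule permutes_compose[OF \<sigma> permutes_reverse])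
  next
    fix \<tau> i j
    assume \<tau>: "\<tau> permutes {1..n}" and ij: "i \<in> {1..n}" "j \<in> {1..n}" "i < j" "\<tau> j < \<tau> i"
    have \<tau>_in: "\<tau> k \<in> {1..n}" if "k \<in> {1..n}" for k
      using permutes_in_image[OF \<tau>] that by blast
    define u where "u = (\<lambda>k. x (n + 1 - \<tau> (transpose i j k)))"
    have "u ` {1..n} \<subseteq> x ` {1..n}"
    proof (rule image_subsetI)
      fix k assume "k \<in> {1..n}"
      then have "transpose i j k \<in> {1..n}"
        using permutes_in_image[OF permutes_swap_id[OF ij(1,2)]] by blast
      then have "n + 1 - \<tau> (transpose i j k) \<in> {1..n}"
        using \<tau>_in by fastforce
      then show "u k \<in> x ` {1..n}"
        unfolding u_def by (rule imageI)
    qed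
    moreover have "u j \<le> u i"
      using \<tau>_in[OF ij(1)] \<tau>_in[OF ij(2)] \<open>\<tau> j < \<tau> i\<close> by (auto simp: u_def intro!: x_mono)
    ultimately have "S u \<le> S (u \<circ> transpose i j)"
      using sorting_swap ij by blast
    moreover have "u \<circ> transpose i j = (\<lambda>k. x (n + 1 - \<tau> k))"
      by (simp add: u_def fun_eq_iff)
    ultimately show "S (\<lambda>k. x (n + 1 - (\<tau> \<circ> transpose i j) k)) \<le> S (\<lambda>k. x (n + 1 - \<tau> k))"
      by (simp add: u_def)
  qed simp
  also have "S (\<lambda>k. x (n + 1 - (\<rho> \<circ> \<sigma>) k)) = S (x \<circ> \<sigma>)"
  proof (rule S_cong)
    fix k assume "k \<in> {1..n}"
    then have "\<sigma> k \<in> {1..n}"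
      using permutes_in_image[OF \<sigma>] by blast
    then show "x (n + 1 - (\<rho> \<circ> \<sigma>) k) = (x \<circ> \<sigma>) k"
      by (simp add: \<rho>_def)
  qed
  finally show ?thesis
    by simp
qed

lemma uninorm_closed: "uninorm f \<Longrightarrow> x \<in> {0..1} \<Longrightarrow> y \<in> {0..1} \<Longrightarrow> f x y \<in> {0..1}"
  unfolding uninorm_def by blast

lemma uninorm_commute: "uninorm f \<Longrightarrow> x \<in> {0..1} \<Longrightarrow> y \<in> {0..1} \<Longrightarrow> f x y = f y x"
  unfolding uninorm_def by blast

lemma uninorm_assoc:
  "uninorm f \<Longrightarrow> x \<in> {0..1} \<Longrightarrow> y \<in> {0..1} \<Longrightarrow> z \<in> {0..1} \<Longrightarrow> f (f x y) z = f x (f y z)"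
  unfolding uninorm_def by blast

lemma uninorm_mono_left:
  "uninorm f \<Longrightarrow> x \<in> {0..1} \<Longrightarrow> y \<in> {0..1} \<Longrightarrow> z \<in> {0..1} \<Longrightarrow> x \<le> y \<Longrightarrow> f x z \<le> f y z"
  unfolding uninorm_def by blast

lemma uninorm_mono_right:
  "uninorm f \<Longrightarrow> x \<in> {0..1} \<Longrightarrow> y \<in> {0..1} \<Longrightarrow> z \<in> {0..1} \<Longrightarrow> y \<le> z \<Longrightarrow> f x y \<le> f x z"
  using uninorm_mono_left uninorm_commute by metis

lemma property_A'_commute_le:
  assumes "property_A' f" "uninorm f"
    and "p \<in> {0..1}" "q \<in> {0..1}" "r \<in> {0..1}" "s \<in> {0..1}"
    and "p \<le> q" "p \<le> r" "q \<le> s" "r \<le> s" "q + r \<le> p + s"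
  shows "f q r \<le> f p s"
proof (cases "q \<le> r")
  case True
  with assms show ?thesis unfolding property_A'_def by auto
next
  case False
  with assms have "f r q \<le> f p s" unfolding property_A'_def by auto
  with assms show ?thesis using uninorm_commute by metis
qed

lemma uninorm_exchange_le:
  assumes "uninorm otimes" "property_B otimes" "uninorm oplus" "property_A' oplus"
    and ab: "a \<in> {0..1}" "b \<in> {0..1}" "a \<le> b"
    and cd: "c \<in> {0..1}" "d \<in> {0..1}" "c \<le> d"
  shows "oplus (otimes b c) (otimes a d) \<le> oplus (otimes a c) (otimes b d)"
proof (rule property_A'_commute_le[OF assms(4,3)])
  have "otimes a d - otimes a c \<le> otimes b d - otimes b c"
    using assms(2) ab cd unfolding property_B_def by auto
  then show "otimes b c + otimes a d \<le> otimes a c + otimes b d"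
    by linarith
qed (use assms(1) ab cd in \<open>blast intro: uninorm_closed uninorm_mono_left uninorm_mono_right\<close>)+

lemma bigop_Suc: "1 \<le> n \<Longrightarrow> bigop f t (Suc n) = f (bigop f t n) (t (Suc n))"
  by (simp add: bigop_def)

lemma bigop_cong:
  assumes "1 \<le> n" and "\<And>k. k \<in> {1..n} \<Longrightarrow> t k = t' k"
  shows "bigop f t n = bigop f t' n"
proof -
  have "map t [2..<n+1] = map t' [2..<n+1]"
    using assms(2) by (intro map_cong) auto
  moreover have "t 1 = t' 1"
    using assms by simp
  ultimately show ?thesis
    unfolding bigop_def by (simp only:)
qed

lemma bigop_closed:
  assumes "uninorm f" and "1 \<le> n" and "\<And>k. k \<in> {1..n} \<Longrightarrow> t k \<in> {0..1}"
  shows "bigop f t n \<in> {0..1}"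
  using assms(2,3)
proof (induction n rule: nat_induct_at_least)
  case base
  then show ?case by (simp add: bigop_def)
next
  case (Suc n)
  have "bigop f t n \<in> {0..1}"
    by (rule Suc.IH) (use Suc.prems in auto)
  moreover have "t (Suc n) \<in> {0..1}"
    by (rule Suc.prems) (use Suc.hyps in auto)
  ultimately show ?case
    unfolding bigop_Suc[OF Suc.hyps] by (rule uninorm_closed[OF assms(1)])
qed

text \<open>A uninorm is a commutative semigroup only on \<open>[0,1]\<close>. To reuse \<^locale>\<open>comm_monoid_set\<close>
  we clamp arguments into \<open>[0,1]\<close> and adjoin the point \<open>2 \<notin> [0,1]\<close> as an external unit.\<close>
locale uninorm_sum =
  fixes f :: "real \<Rightarrow> real \<Rightarrow> real"
  assumes uninorm: "uninorm f"
begin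

definition clamp :: "real \<Rightarrow> real" where
  "clamp x = max 0 (min 1 x)"

definition extended :: "real \<Rightarrow> real \<Rightarrow> real" where
  "extended x y = (if x = 2 then y else if y = 2 then x else f (clamp x) (clamp y))"

lemma clamp_in_unit_interval: "clamp x \<in> {0..1}"
  by (simp add: clamp_def)

lemma clamp_id: "x \<in> {0..1} \<Longrightarrow> clamp x = x"
  by (simp add: clamp_def)

lemma extended_eq: "x \<in> {0..1} \<Longrightarrow> y \<in> {0..1} \<Longrightarrow> extended x y = f x y"
  by (auto simp: extended_def clamp_id)

lemma extended_mono_left:
  assumes "x \<in> {0..1}" "y \<in> {0..1}" "x \<le> y"
  shows "extended x z \<le> extended y z"
proof (cases "z = 2")
  case False
  then have "extended x z = f x (clamp z)" "extended y z = f y (clamp z)"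
    using assms(1,2) by (auto simp: extended_def clamp_id)
  then show ?thesis
    using uninorm_mono_left[OF uninorm assms(1,2) clamp_in_unit_interval assms(3)] by simp
qed (use assms in \<open>simp add: extended_def\<close>)

sublocale Sum: comm_monoid_set extended 2
proof unfold_locales
  fix x y z
  show "extended (extended x y) z = extended x (extended y z)"
  proof (cases "x = 2 \<or> y = 2 \<or> z = 2")
    case False
    have closed: "f (clamp u) (clamp v) \<in> {0..1}" for u v
      using uninorm_closed[OF uninorm clamp_in_unit_interval clamp_in_unit_interval] .
    have "f (clamp u) (clamp v) \<noteq> 2" for u v
      using closed[of u v] by auto
    with False closed show ?thesis
      using uninorm_assoc[OF uninorm clamp_in_unit_interval clamp_in_unit_interval clamp_in_unit_interval]
      by (simp add: extended_def clamp_id)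
  qed (auto simp: extended_def)
next
  fix x y
  show "extended x y = extended y x"
    using uninorm_commute[OF uninorm clamp_in_unit_interval clamp_in_unit_interval]
    by (simp add: extended_def)
next
  fix x
  show "extended x 2 = x"
    by (simp add: extended_def)
qed

lemma bigop_eq_Sum:
  assumes "1 \<le> n" and "\<And>k. k \<in> {1..n} \<Longrightarrow> t k \<in> {0..1}"
  shows "bigop f t n = Sum.F t {1..n}"
  using assms
proof (induction n rule: nat_induct_at_least)
  case base
  then show ?case by (simp add: bigop_def)
next
  case (Suc n)
  have t_in: "t k \<in> {0..1}" if "k \<in> {1..n}" for k
    using Suc.prems that by simp
  have IH: "bigop f t n = Sum.F t {1..n}"
    using Suc.IH t_in by blast
  have "t (Suc n) \<in> {0..1}"
    using Suc.prems by simp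
  moreover have "Sum.F t {1..n} \<in> {0..1}"
    unfolding IH[symmetric] by (rule bigop_closed[OF uninorm Suc.hyps t_in])
  ultimately have "bigop f t (Suc n) = extended (t (Suc n)) (Sum.F t {1..n})"
    by (simp only: bigop_Suc[OF Suc.hyps] IH extended_eq uninorm_commute[OF uninorm])
  also have "\<dots> = Sum.F t {1..Suc n}"
    by (simp add: atLeastAtMostSuc_conv)
  finally show ?case .
qed

lemma bigop_mono_two_terms:
  assumes ij: "i \<in> {1..n}" "j \<in> {1..n}" "i \<noteq> j"
    and t: "\<And>k. k \<in> {1..n} \<Longrightarrow> t k \<in> {0..1}" and t': "\<And>k. k \<in> {1..n} \<Longrightarrow> t' k \<in> {0..1}"
    and same: "\<And>k. k \<in> {1..n} \<Longrightarrow> k \<noteq> i \<Longrightarrow> k \<noteq> j \<Longrightarrow> t k = t' k"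
    and le: "f (t i) (t j) \<le> f (t' i) (t' j)"
  shows "bigop f t n \<le> bigop f t' n"
proof -
  define R where "R = {1..n} - {i} - {j}"
  have split: "Sum.F g {1..n} = extended (extended (g i) (g j)) (Sum.F g R)" for g
    using ij by (simp add: R_def Sum.remove[of _ i] Sum.remove[of _ j] Sum.assoc)
  have "Sum.F t R = Sum.F t' R"
    using same by (intro Sum.cong) (auto simp: R_def)
  have "1 \<le> n"
    using ij by simp
  have "bigop f t n = extended (f (t i) (t j)) (Sum.F t R)"
    by (simp only: bigop_eq_Sum[OF \<open>1 \<le> n\<close> t] split extended_eq[OF t[OF ij(1)] t[OF ij(2)]])
  also have "\<dots> \<le> extended (f (t' i) (t' j)) (Sum.F t R)"
    using le t t' ij by (intro extended_mono_left uninorm_closed[OF uninorm]) auto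
  also have "\<dots> = bigop f t' n"
    by (simp only: bigop_eq_Sum[OF \<open>1 \<le> n\<close> t'] split extended_eq[OF t'[OF ij(1)] t'[OF ij(2)]]
        \<open>Sum.F t R = Sum.F t' R\<close>)
  finally show ?thesis .
qed

end

lemma bigop_sorting_swap_le:
  assumes "uninorm otimes" "property_B otimes" "uninorm oplus" "property_A' oplus"
    and u: "u ` {1..n} \<subseteq> {0..1}" and y: "y ` {1..n} \<subseteq> {0..1}"
    and ij: "i \<in> {1..n}" "j \<in> {1..n}" "i < j" and "y i \<le> y j" "u j \<le> u i"
  shows "bigop oplus (\<lambda>k. otimes (u k) (y k)) n \<le> bigop oplus (\<lambda>k. otimes ((u \<circ> transpose i j) k) (y k)) n"
proof (rule uninorm_sum.bigop_mono_two_terms[OF uninorm_sum.intro[OF assms(3)] ij(1,2)])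
  have "u i \<in> {0..1}" "u j \<in> {0..1}" "y i \<in> {0..1}" "y j \<in> {0..1}"
    using u y ij(1,2) by blast+
  then show "oplus (otimes (u i) (y i)) (otimes (u j) (y j))
      \<le> oplus (otimes ((u \<circ> transpose i j) i) (y i)) (otimes ((u \<circ> transpose i j) j) (y j))"
    using uninorm_exchange_le[OF assms(1-4)] \<open>y i \<le> y j\<close> \<open>u j \<le> u i\<close> by simp
next
  fix k assume k: "k \<in> {1..n}"
  then have "transpose i j k \<in> {1..n}"
    using permutes_in_image[OF permutes_swap_id[OF ij(1,2)]] by blast
  then have "u k \<in> {0..1}" "u (transpose i j k) \<in> {0..1}" "y k \<in> {0..1}"
    using u y k by blast+
  then show "otimes (u k) (y k) \<in> {0..1}" "otimes ((u \<circ> transpose i j) k) (y k) \<in> {0..1}"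
    unfolding comp_apply by (blast intro: uninorm_closed[OF assms(1)])+
qed (use ij in auto)

theorem theorem6:
  fixes otimes oplus :: "real \<Rightarrow> real \<Rightarrow> real"
  assumes "uninorm otimes" and "uninorm oplus"
    and "property_B otimes" and "property_A' oplus"
  shows "rearrangement_ineq otimes oplus"
  unfolding rearrangement_ineq_def
proof (intro allI impI)
  fix n :: nat and x y :: "nat \<Rightarrow> real" and \<sigma>
  assume "1 \<le> n" and range: "\<forall>i\<in>{1..n}. 0 \<le> x i \<and> x i \<le> 1 \<and> 0 \<le> y i \<and> y i \<le> 1"
    and mono: "\<forall>i\<in>{1..n}. \<forall>j\<in>{1..n}. i \<le> j \<longrightarrow> x i \<le> x j \<and> y i \<le> y j"
    and \<sigma>: "\<sigma> permutes {1..n}"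
  define S where "S u = bigop oplus (\<lambda>k. otimes (u k) (y k)) n" for u
  have x_mono: "\<And>i j. i \<in> {1..n} \<Longrightarrow> j \<in> {1..n} \<Longrightarrow> i \<le> j \<Longrightarrow> x i \<le> x j"
    using mono by blast
  have sorting_swap: "S u \<le> S (u \<circ> transpose i j)"
    if "u ` {1..n} \<subseteq> x ` {1..n}" "i \<in> {1..n}" "j \<in> {1..n}" "i < j" "u j \<le> u i" for u i j
  proof -
    have "u ` {1..n} \<subseteq> {0..1}" "y ` {1..n} \<subseteq> {0..1}"
      using that(1) range by fastforce+
    moreover have "y i \<le> y j"
      using mono that(2-4) by simp
    ultimately show ?thesis
      unfolding S_def using bigop_sorting_swap_le[OF assms(1,3,2,4)] that(2-5) by blast
  qed
  have S_cong: "S u = S v" if "\<And>k. k \<in> {1..n} \<Longrightarrow> u k = v k" for u v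
    unfolding S_def using that by (intro bigop_cong[OF \<open>1 \<le> n\<close>]) simp
  show "S (\<lambda>i. x (n + 1 - i)) \<le> S (\<lambda>i. x (\<sigma> i)) \<and> S (\<lambda>i. x (\<sigma> i)) \<le> S x"
    using rearrangement_reversed_le[where x = x and S = S, OF x_mono sorting_swap S_cong \<sigma>]
      rearrangement_le_sorted[where x = x and S = S, OF x_mono sorting_swap \<sigma>]
    by (simp add: comp_def)
qed

end
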